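(* Let $r,c\ge1$, $n=r+c$, $X_1,X_2$ as below, and $1\le K\le 2^{\min(r,c)}$. For every quantum algorithm $\mathcal A$ making $T$ queries to $\varphi$ and $\varphi^{-1}$, if for every permutation $\varphi$ of $\{0,1\}^n$ with exactly $K$ $X$-pairs $\mathcal A$ outputs an $X$-pair $(x,y)\in X_1\times X_2$ with $\varphi(x)=y$ with probability at least $\epsilon>0$, then $$\epsilon\le\frac{8(T+1)^2K}{2^{\min(r,c)}}.$$
   Context: $X_1\subset\{0,1\}^n$ is the set of strings ending in $0^c$, $X_2\subset\{0,1\}^n$ the set of strings beginning with $0^r$; an $X$-pair of $\varphi$ is $(x,y)\in X_1\times X_2$ with $\varphi(x)=y$. Queries are to the unitaries $O_\varphi:|a\rangle|b\rangle\mapsto|a\rangle|b\oplus\varphi(a)\rangle$ and $O_{\varphi^{-1}}:|a\rangle|b\rangle\mapsto|a\rangle|b\oplus\varphi^{-1}(a)\rangle$; success probability is over the algorithm's randomness and measurements. *)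

theory Defs
  imports Complex_Main "HOL-Combinatorics.Permutations"
begin

text \<open>Bit strings of length n are encoded as naturals below 2^n, most significant
bit first (so the first bit of x is bit n-1 of the number).\<close>

definition bitstrings :: "nat \<Rightarrow> nat set" where
  "bitstrings n = {..<2^n}"

text \<open>X1: strings of length n = r + c ending in 0^c (last c bits zero).\<close>
definition X1 :: "nat \<Rightarrow> nat \<Rightarrow> nat set" where
  "X1 r c = {x \<in> bitstrings (r + c). x mod 2^c = 0}"

text \<open>X2: strings of length n = r + c beginning with 0^r (first r bits zero).\<close>
definition X2 :: "nat \<Rightarrow> nat \<Rightarrow> nat set" where
  "X2 r c = {y \<in> bitstrings (r + c). y < 2^c}"

definition Xpairs :: "nat \<Rightarrow> nat \<Rightarrow> (nat \<Rightarrow> nat) \<Rightarrow> (nat \<times> nat) set" where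
  "Xpairs r c \<phi> = {(x, y). x \<in> X1 r c \<and> y \<in> X2 r c \<and> \<phi> x = y}"

text \<open>Computational basis of the algorithm's register: (control bit, query input a,
query output b, workspace w) with a, b < 2^n and w < m. The control bit selects
whether a query is made to phi (False) or to phi inverse (True).\<close>
type_synonym idx = "bool \<times> nat \<times> nat \<times> nat"
type_synonym qstate = "idx \<Rightarrow> complex"
type_synonym qop = "idx \<Rightarrow> idx \<Rightarrow> complex"

definition basis_set :: "nat \<Rightarrow> nat \<Rightarrow> idx set" where
  "basis_set n m = UNIV \<times> {..<2^n} \<times> {..<2^n} \<times> {..<m}"

definition unitary_on :: "idx set \<Rightarrow> qop \<Rightarrow> bool" where
  "unitary_on B U \<longleftrightarrow>
     (\<forall>i\<in>B. \<forall>j\<in>B. (\<Sum>k\<in>B. cnj (U k i) * U k j) = (if i = j then 1 else 0))"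

definition apply_op :: "idx set \<Rightarrow> qop \<Rightarrow> qstate \<Rightarrow> qstate" where
  "apply_op B U \<psi> = (\<lambda>i. \<Sum>j\<in>B. U i j * \<psi> j)"

definition query :: "(nat \<Rightarrow> nat) \<Rightarrow> qstate \<Rightarrow> qstate" where
  "query \<phi> \<psi> = (\<lambda>(c, a, b, w). \<psi> (c, a, xor b ((if c then inv \<phi> else \<phi>) a), w))"

fun run :: "nat \<Rightarrow> nat \<Rightarrow> (nat \<Rightarrow> qop) \<Rightarrow> (nat \<Rightarrow> nat) \<Rightarrow> nat \<Rightarrow> qstate" where
  "run n m U \<phi> 0 = apply_op (basis_set n m) (U 0) (\<lambda>i. if i = (False, 0, 0, 0) then 1 else 0)"
| "run n m U \<phi> (Suc t) = apply_op (basis_set n m) (U (Suc t)) (query \<phi> (run n m U \<phi> t))"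

definition success_prob ::
  "nat \<Rightarrow> nat \<Rightarrow> nat \<Rightarrow> (nat \<Rightarrow> qop) \<Rightarrow> (idx \<Rightarrow> nat \<times> nat) \<Rightarrow> (nat \<Rightarrow> nat) \<Rightarrow> (nat \<times> nat) set \<Rightarrow> real" where
  "success_prob n m T U out \<phi> S =
     (\<Sum>i\<in>{i \<in> basis_set n m. out i \<in> S}. (cmod (run n m U \<phi> T i))^2)"

end

theory Submission
  imports Defs "HOL-Analysis.L2_Norm" "HOL-Analysis.Convex" "HOL-Library.Disjoint_Sets"
begin

(* Split {0, ..., 2^min(r,c) - 1} into M = 2^min(r,c) div K disjoint blocks J_z of size K and let
   phi_z swap j with j * 2^c for j in J_z, so that its X-pairs are exactly the K pairs (j * 2^c, j).
   All phi_z agree with one base permutation phi_0 outside pairwise disjoint sets S_z.  By the hybrid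
   argument, replacing phi_0 by phi_z changes the state after query k by at most twice the norm of the
   part of the state querying S_z; as the S_z are disjoint, Cauchy-Schwarz bounds the sum over z of
   these changes by 2 sqrt M, and likewise the sum over z of the base success amplitudes by sqrt M.
   Hence M sqrt eps <= sqrt M (2T + 1), i.e. M eps <= (2T + 1)^2, and 2^min(r,c) < 2 K M. *)

section \<open>The hybrid argument\<close>

definition state_norm :: "idx set \<Rightarrow> qstate \<Rightarrow> real" where
  "state_norm B \<psi> = L2_set (\<lambda>i. cmod (\<psi> i)) B"

lemma state_norm_nonneg [simp]: "0 \<le> state_norm B \<psi>"
  unfolding state_norm_def by simp

lemma state_norm_sq: "(state_norm B \<psi>)\<^sup>2 = (\<Sum>i\<in>B. (cmod (\<psi> i))\<^sup>2)"
  unfolding state_norm_def L2_set_def by (simp add: sum_nonneg)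

lemma state_norm_add_le: "state_norm B (\<lambda>i. \<psi> i + \<chi> i) \<le> state_norm B \<psi> + state_norm B \<chi>"
proof -
  have "state_norm B (\<lambda>i. \<psi> i + \<chi> i) \<le> L2_set (\<lambda>i. cmod (\<psi> i) + cmod (\<chi> i)) B"
    unfolding state_norm_def by (rule L2_set_mono) (auto simp: norm_triangle_ineq)
  also have "\<dots> \<le> state_norm B \<psi> + state_norm B \<chi>"
    unfolding state_norm_def by (rule L2_set_triangle_ineq)
  finally show ?thesis .
qed

lemma state_norm_diff_le:
  "state_norm B (\<lambda>i. \<psi> i - \<chi> i) \<le> state_norm B (\<lambda>i. \<psi> i - \<xi> i) + state_norm B (\<lambda>i. \<xi> i - \<chi> i)"
  using state_norm_add_le[of B "\<lambda>i. \<psi> i - \<xi> i" "\<lambda>i. \<xi> i - \<chi> i"] by simp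

lemma state_norm_subset_le: "finite B \<Longrightarrow> A \<subseteq> B \<Longrightarrow> state_norm A \<psi> \<le> state_norm B \<psi>"
  unfolding state_norm_def L2_set_def by (intro real_sqrt_le_mono sum_mono2) auto

lemma sum_norm_sq_apply_op:
  assumes B: "finite B" and U: "unitary_on B U"
  shows "(\<Sum>k\<in>B. (cmod (apply_op B U \<psi> k))\<^sup>2) = (\<Sum>j\<in>B. (cmod (\<psi> j))\<^sup>2)"
proof -
  have "complex_of_real (\<Sum>k\<in>B. (cmod (apply_op B U \<psi> k))\<^sup>2)
      = (\<Sum>k\<in>B. \<Sum>j\<in>B. \<Sum>i\<in>B. (U k j * \<psi> j) * (cnj (U k i) * cnj (\<psi> i)))"
    by (simp only: of_real_sum complex_norm_square apply_op_def cnj_sum complex_cnj_mult sum_product)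
  also have "\<dots> = (\<Sum>j\<in>B. \<Sum>i\<in>B. \<psi> j * cnj (\<psi> i) * (\<Sum>k\<in>B. cnj (U k i) * U k j))"
    by (subst sum.swap, rule sum.cong[OF refl], subst sum.swap)
       (simp add: sum_distrib_left ac_simps)
  also have "\<dots> = (\<Sum>j\<in>B. \<Sum>i\<in>B. if i = j then \<psi> j * cnj (\<psi> i) else 0)"
    using U unfolding unitary_on_def by (intro sum.cong refl) auto
  also have "\<dots> = (\<Sum>j\<in>B. \<psi> j * cnj (\<psi> j))"
    using B by simp
  also have "\<dots> = complex_of_real (\<Sum>j\<in>B. (cmod (\<psi> j))\<^sup>2)"
    by (simp only: of_real_sum complex_norm_square)
  finally show ?thesis by (simp only: of_real_eq_iff)
qed

lemma state_norm_apply_op: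
  "finite B \<Longrightarrow> unitary_on B U \<Longrightarrow> state_norm B (apply_op B U \<psi>) = state_norm B \<psi>"
  unfolding state_norm_def L2_set_def by (simp add: sum_norm_sq_apply_op)

lemma apply_op_diff: "apply_op B U \<psi> i - apply_op B U \<chi> i = apply_op B U (\<lambda>j. \<psi> j - \<chi> j) i"
  unfolding apply_op_def by (simp add: sum_subtractf right_diff_distrib)

lemma finite_basis_set: "finite (basis_set n m)"
  unfolding basis_set_def by simp

definition query_index :: "(nat \<Rightarrow> nat) \<Rightarrow> idx \<Rightarrow> idx" where
  "query_index \<phi> = (\<lambda>(c, a, b, w). (c, a, xor b ((if c then inv \<phi> else \<phi>) a), w))"

lemma query_eq: "query \<phi> \<psi> = (\<lambda>i. \<psi> (query_index \<phi> i))"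
  by (auto simp: query_def query_index_def)

lemma query_index_involution: "query_index \<phi> (query_index \<phi> i) = i"
  by (cases i) (simp add: query_index_def xor.assoc)

lemma query_index_input: "fst (snd (query_index \<phi> i)) = fst (snd i)"
  by (cases i) (simp add: query_index_def)

lemma query_index_in_basis_set:
  assumes "\<phi> permutes {..<2^n}" and "i \<in> basis_set n m"
  shows "query_index \<phi> i \<in> basis_set n m"
proof -
  have "\<phi> a < 2^n" "inv \<phi> a < 2^n" if "a < 2^n" for a
    using that permutes_in_image[OF assms(1)] permutes_in_image[OF permutes_inv[OF assms(1)]] by auto
  moreover have "xor b v < 2^n" if "b < 2^n" "v < 2^n" for b v :: nat
    using that by (metis take_bit_nat_eq_self_iff take_bit_xor)
  ultimately show ?thesis
    using assms(2) by (cases i) (auto simp: query_index_def basis_set_def)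
qed

lemma sum_query_index:
  assumes "\<phi> permutes {..<2^n}"
  shows "(\<Sum>i\<in>{i\<in>basis_set n m. P (fst (snd i))}. g (query_index \<phi> i))
       = (\<Sum>i\<in>{i\<in>basis_set n m. P (fst (snd i))}. g i)"
  by (rule sum.reindex_bij_witness[where i="query_index \<phi>" and j="query_index \<phi>"])
     (auto simp: query_index_involution query_index_input query_index_in_basis_set[OF assms])

lemma state_norm_query:
  assumes "\<phi> permutes {..<2^n}"
  shows "state_norm (basis_set n m) (query \<phi> \<psi>) = state_norm (basis_set n m) \<psi>"
  using sum_query_index[OF assms, where P="\<lambda>_. True" and g="\<lambda>i. (cmod (\<psi> i))\<^sup>2"]
  by (simp add: state_norm_def L2_set_def query_eq)

lemma state_norm_run_le:
  assumes "\<phi> permutes {..<2^n}" and "\<forall>t\<le>T. unitary_on (basis_set n m) (U t)" and "t \<le> T"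
  shows "state_norm (basis_set n m) (run n m U \<phi> t) \<le> 1"
  using assms(3)
proof (induction t)
  case 0
  have "(\<Sum>i\<in>basis_set n m. (cmod (if i = (False, 0, 0, 0) then 1 else 0))\<^sup>2)
      = (\<Sum>i\<in>basis_set n m. if i = (False, 0, 0, 0) then 1 else 0)"
    by (intro sum.cong) auto
  then have "(\<Sum>i\<in>basis_set n m. (cmod (if i = (False, 0, 0, 0) then 1 else 0))\<^sup>2) \<le> 1"
    by (simp add: finite_basis_set)
  then show ?case
    using assms(2) by (simp add: state_norm_apply_op finite_basis_set) (simp add: state_norm_def L2_set_def)
next
  case (Suc t)
  then show ?case
    using assms by (simp add: state_norm_apply_op finite_basis_set state_norm_query)
qed

lemma state_norm_run_diff_le:
  assumes "\<phi> permutes {..<2^n}" and "\<forall>t\<le>T. unitary_on (basis_set n m) (U t)" and "t \<le> T"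
  shows "state_norm (basis_set n m) (\<lambda>i. run n m U \<phi> t i - run n m U \<phi>' t i)
     \<le> (\<Sum>k<t. state_norm (basis_set n m)
                 (\<lambda>i. query \<phi> (run n m U \<phi>' k) i - query \<phi>' (run n m U \<phi>' k) i))"
  using assms(3)
proof (induction t)
  case 0
  then show ?case by (simp add: state_norm_def L2_set_def)
next
  case (Suc t)
  let ?B = "basis_set n m" and ?\<psi> = "run n m U \<phi> t" and ?\<chi> = "run n m U \<phi>' t"
  have "state_norm ?B (\<lambda>i. run n m U \<phi> (Suc t) i - run n m U \<phi>' (Suc t) i)
      = state_norm ?B (\<lambda>i. query \<phi> ?\<psi> i - query \<phi>' ?\<chi> i)"
    using assms(2) Suc.prems by (simp add: apply_op_diff state_norm_apply_op finite_basis_set)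
  also have "\<dots> \<le> state_norm ?B (\<lambda>i. query \<phi> ?\<psi> i - query \<phi> ?\<chi> i)
                  + state_norm ?B (\<lambda>i. query \<phi> ?\<chi> i - query \<phi>' ?\<chi> i)"
    by (rule state_norm_diff_le)
  also have "state_norm ?B (\<lambda>i. query \<phi> ?\<psi> i - query \<phi> ?\<chi> i) = state_norm ?B (\<lambda>i. ?\<psi> i - ?\<chi> i)"
    using state_norm_query[OF assms(1), of m "\<lambda>i. ?\<psi> i - ?\<chi> i"] by (simp add: query_eq)
  finally show ?case
    using Suc by simp
qed

lemma state_norm_query_diff_sq_le:
  assumes "\<phi> permutes {..<2^n}" and "\<phi>' permutes {..<2^n}"
    and agree: "\<And>a. a \<notin> S \<Longrightarrow> \<phi> a = \<phi>' a \<and> inv \<phi> a = inv \<phi>' a"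
  shows "(state_norm (basis_set n m) (\<lambda>i. query \<phi> \<psi> i - query \<phi>' \<psi> i))\<^sup>2
     \<le> 4 * (\<Sum>i\<in>{i\<in>basis_set n m. fst (snd i) \<in> S}. (cmod (\<psi> i))\<^sup>2)"
proof -
  let ?A = "{i\<in>basis_set n m. fst (snd i) \<in> S}"
  let ?d = "\<lambda>i. (cmod (\<psi> (query_index \<phi> i) - \<psi> (query_index \<phi>' i)))\<^sup>2"
  have "?d i = 0" if "i \<in> basis_set n m - ?A" for i
    using that agree by (cases i) (auto simp: query_index_def)
  have "(state_norm (basis_set n m) (\<lambda>i. query \<phi> \<psi> i - query \<phi>' \<psi> i))\<^sup>2
      = (\<Sum>i\<in>basis_set n m. ?d i)"
    by (simp add: state_norm_sq query_eq)
  also have "\<dots> = (\<Sum>i\<in>?A. ?d i)"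
    using \<open>\<And>i. i \<in> basis_set n m - ?A \<Longrightarrow> ?d i = 0\<close>
    by (intro sum.mono_neutral_right finite_basis_set) auto
  also have "\<dots> \<le> (\<Sum>i\<in>?A. 2 * (cmod (\<psi> (query_index \<phi> i)))\<^sup>2 + 2 * (cmod (\<psi> (query_index \<phi>' i)))\<^sup>2)"
  proof (rule sum_mono)
    fix i
    have "?d i \<le> (cmod (\<psi> (query_index \<phi> i)) + cmod (\<psi> (query_index \<phi>' i)))\<^sup>2"
      by (intro power_mono norm_triangle_ineq4) simp
    also have "\<dots> \<le> 2 * (cmod (\<psi> (query_index \<phi> i)))\<^sup>2 + 2 * (cmod (\<psi> (query_index \<phi>' i)))\<^sup>2"
      using sum_squares_bound[of "cmod (\<psi> (query_index \<phi> i))" "cmod (\<psi> (query_index \<phi>' i))"]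
      by (simp add: power2_sum)
    finally show "?d i \<le> \<dots>" .
  qed
  also have "\<dots> = 4 * (\<Sum>i\<in>?A. (cmod (\<psi> i))\<^sup>2)"
    using sum_query_index[OF assms(1), where P="\<lambda>a. a \<in> S" and m=m and g="\<lambda>i. (cmod (\<psi> i))\<^sup>2"]
      sum_query_index[OF assms(2), where P="\<lambda>a. a \<in> S" and m=m and g="\<lambda>i. (cmod (\<psi> i))\<^sup>2"]
    by (simp add: sum.distrib sum_distrib_left[symmetric])
  finally show ?thesis .
qed

lemma sqrt_success_prob:
  "sqrt (success_prob n m T U out \<phi> Q) = state_norm {i\<in>basis_set n m. out i \<in> Q} (run n m U \<phi> T)"
  by (simp add: success_prob_def state_norm_def L2_set_def)

lemma sqrt_success_prob_le:
  assumes "\<phi> permutes {..<2^n}" and "\<forall>t\<le>T. unitary_on (basis_set n m) (U t)"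
  shows "sqrt (success_prob n m T U out \<phi> Q) \<le> sqrt (success_prob n m T U out \<phi>' Q)
     + (\<Sum>k<T. state_norm (basis_set n m)
                 (\<lambda>i. query \<phi> (run n m U \<phi>' k) i - query \<phi>' (run n m U \<phi>' k) i))"
proof -
  let ?A = "{i\<in>basis_set n m. out i \<in> Q}"
  let ?\<psi> = "run n m U \<phi> T" and ?\<chi> = "run n m U \<phi>' T"
  have "state_norm ?A ?\<psi> \<le> state_norm ?A ?\<chi> + state_norm ?A (\<lambda>i. ?\<psi> i - ?\<chi> i)"
    using state_norm_add_le[of ?A ?\<chi> "\<lambda>i. ?\<psi> i - ?\<chi> i"] by simp
  also have "state_norm ?A (\<lambda>i. ?\<psi> i - ?\<chi> i) \<le> state_norm (basis_set n m) (\<lambda>i. ?\<psi> i - ?\<chi> i)"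
    by (intro state_norm_subset_le finite_basis_set) auto
  also have "\<dots> \<le> (\<Sum>k<T. state_norm (basis_set n m)
                 (\<lambda>i. query \<phi> (run n m U \<phi>' k) i - query \<phi>' (run n m U \<phi>' k) i))"
    using state_norm_run_diff_le[OF assms] by simp
  finally show ?thesis
    by (simp add: sqrt_success_prob)
qed

lemma sum_le_sqrt_card_mult:
  fixes f :: "'a \<Rightarrow> real"
  assumes "(\<Sum>z\<in>Z. (f z)\<^sup>2) \<le> b\<^sup>2" and "0 \<le> b"
  shows "(\<Sum>z\<in>Z. f z) \<le> sqrt (card Z) * b"
proof -
  have "(\<Sum>z\<in>Z. f z)\<^sup>2 \<le> (\<Sum>z\<in>Z. (f z)\<^sup>2) * card Z"
    by (rule sum_squared_le_sum_of_squares)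
  also have "\<dots> \<le> b\<^sup>2 * card Z"
    using assms(1) by (rule mult_right_mono) simp
  finally have "(\<Sum>z\<in>Z. f z) \<le> sqrt (b\<^sup>2 * card Z)"
    by (rule real_le_rsqrt)
  then show ?thesis
    using assms(2) by (simp add: real_sqrt_mult mult.commute)
qed

lemma sum_disjoint_family_le:
  fixes g :: "'b \<Rightarrow> real"
  assumes "finite B" and "finite Z" and "\<And>z. z \<in> Z \<Longrightarrow> A z \<subseteq> B"
    and "disjoint_family_on A Z" and "\<And>i. i \<in> B \<Longrightarrow> 0 \<le> g i"
  shows "(\<Sum>z\<in>Z. \<Sum>i\<in>A z. g i) \<le> (\<Sum>i\<in>B. g i)"
proof -
  have "(\<Sum>z\<in>Z. \<Sum>i\<in>A z. g i) = (\<Sum>i\<in>(\<Union>z\<in>Z. A z). g i)"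
    using assms(1-4) by (intro sum.UNION_disjoint_family[symmetric]) (auto intro: finite_subset)
  also have "\<dots> \<le> (\<Sum>i\<in>B. g i)"
    using assms by (intro sum_mono2) auto
  finally show ?thesis .
qed

theorem sum_sqrt_success_prob_le:
  fixes \<phi> :: "'z \<Rightarrow> nat \<Rightarrow> nat" and Q :: "'z \<Rightarrow> (nat \<times> nat) set" and S :: "'z \<Rightarrow> nat set"
  assumes "finite Z" and U: "\<forall>t\<le>T. unitary_on (basis_set n m) (U t)"
    and \<phi>\<^sub>0: "\<phi>\<^sub>0 permutes {..<2^n}" and \<phi>: "\<And>z. z \<in> Z \<Longrightarrow> \<phi> z permutes {..<2^n}"
    and agree: "\<And>z a. z \<in> Z \<Longrightarrow> a \<notin> S z \<Longrightarrow> \<phi> z a = \<phi>\<^sub>0 a \<and> inv (\<phi> z) a = inv \<phi>\<^sub>0 a"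
    and "disjoint_family_on S Z" and "disjoint_family_on Q Z"
  shows "(\<Sum>z\<in>Z. sqrt (success_prob n m T U out (\<phi> z) (Q z))) \<le> sqrt (card Z) * (2 * real T + 1)"
proof -
  let ?B = "basis_set n m"
  define \<chi> where "\<chi> k = run n m U \<phi>\<^sub>0 k" for k
  define D where "D z k = state_norm ?B (\<lambda>i. query (\<phi> z) (\<chi> k) i - query \<phi>\<^sub>0 (\<chi> k) i)" for z k
  have norm_sq_\<chi>: "(\<Sum>i\<in>?B. (cmod (\<chi> k i))\<^sup>2) \<le> 1" if "k \<le> T" for k
    using state_norm_run_le[OF \<phi>\<^sub>0 U that] unfolding \<chi>_def state_norm_sq[symmetric]
    by (simp add: power_le_one)
  have base: "(\<Sum>z\<in>Z. sqrt (success_prob n m T U out \<phi>\<^sub>0 (Q z))) \<le> sqrt (card Z) * 1"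
  proof (rule sum_le_sqrt_card_mult)
    have "(\<Sum>z\<in>Z. (sqrt (success_prob n m T U out \<phi>\<^sub>0 (Q z)))\<^sup>2)
        = (\<Sum>z\<in>Z. \<Sum>i\<in>{i\<in>?B. out i \<in> Q z}. (cmod (\<chi> T i))\<^sup>2)"
      by (simp add: success_prob_def \<chi>_def sum_nonneg)
    also have "\<dots> \<le> (\<Sum>i\<in>?B. (cmod (\<chi> T i))\<^sup>2)"
      using \<open>disjoint_family_on Q Z\<close>
      by (intro sum_disjoint_family_le finite_basis_set \<open>finite Z\<close>)
         (auto simp: disjoint_family_on_def)
    finally show "(\<Sum>z\<in>Z. (sqrt (success_prob n m T U out \<phi>\<^sub>0 (Q z)))\<^sup>2) \<le> 1\<^sup>2"
      using norm_sq_\<chi>[of T] by simp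
  qed simp
  have distance: "(\<Sum>z\<in>Z. D z k) \<le> sqrt (card Z) * 2" if "k < T" for k
  proof (rule sum_le_sqrt_card_mult)
    have "(\<Sum>z\<in>Z. (D z k)\<^sup>2) \<le> (\<Sum>z\<in>Z. 4 * (\<Sum>i\<in>{i\<in>?B. fst (snd i) \<in> S z}. (cmod (\<chi> k i))\<^sup>2))"
      unfolding D_def using \<phi>\<^sub>0 \<phi> agree
      by (intro sum_mono state_norm_query_diff_sq_le) auto
    also have "\<dots> \<le> 4 * (\<Sum>i\<in>?B. (cmod (\<chi> k i))\<^sup>2)"
      unfolding sum_distrib_left[symmetric] using \<open>disjoint_family_on S Z\<close>
      by (intro mult_left_mono sum_disjoint_family_le finite_basis_set \<open>finite Z\<close>)
         (auto simp: disjoint_family_on_def)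
    finally show "(\<Sum>z\<in>Z. (D z k)\<^sup>2) \<le> 2\<^sup>2"
      using norm_sq_\<chi>[of k] that by simp
  qed simp
  have "(\<Sum>z\<in>Z. sqrt (success_prob n m T U out (\<phi> z) (Q z)))
      \<le> (\<Sum>z\<in>Z. sqrt (success_prob n m T U out \<phi>\<^sub>0 (Q z)) + (\<Sum>k<T. D z k))"
    unfolding D_def \<chi>_def using \<phi> U by (intro sum_mono sqrt_success_prob_le) auto
  also have "\<dots> = (\<Sum>z\<in>Z. sqrt (success_prob n m T U out \<phi>\<^sub>0 (Q z))) + (\<Sum>k<T. \<Sum>z\<in>Z. D z k)"
    by (simp add: sum.distrib sum.swap[of _ Z])
  also have "\<dots> \<le> sqrt (card Z) * 1 + (\<Sum>k<T. sqrt (card Z) * 2)"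
    using base distance by (intro add_mono sum_mono) auto
  also have "\<dots> = sqrt (card Z) * (2 * real T + 1)"
    by (simp add: algebra_simps)
  finally show ?thesis .
qed

section \<open>Planted permutations\<close>

(* Besides swapping j and j * p for j in J, 0 is swapped with p + 1 when 0 is not in J, because a
   fixed point 0 would be an unwanted X-pair (0, 0). *)
definition plant :: "nat \<Rightarrow> nat set \<Rightarrow> nat \<Rightarrow> nat" where
  "plant p J x =
     (if x \<in> (\<lambda>j. j * p) ` J then x div p
      else if x \<in> J then x * p
      else if 0 \<in> J then x
      else Transposition.transpose 0 (p + 1) x)"

definition plant_support :: "nat \<Rightarrow> nat set \<Rightarrow> nat set" where
  "plant_support p J = J \<union> (\<lambda>j. j * p) ` J \<union> (if 0 \<in> J then {p + 1} else {})"

lemma not_dvd_Suc_self: "2 \<le> (p::nat) \<Longrightarrow> \<not> p dvd p + 1"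
  using dvd_add_right_iff[of p p 1] by simp

lemma plant_involution:
  assumes "2 \<le> p" and "J \<subseteq> {..<p}"
  shows "plant p J (plant p J x) = x"
proof -
  have small: "y < p" if "y \<in> J" for y
    using assms(2) that by auto
  have mult_in_J: "j = 0" if "j * p \<in> J" for j
    using small[OF that] by (cases j) auto
  have "p + 1 \<notin> J" "p + 1 \<notin> (\<lambda>j. j * p) ` J"
    using small[of "p + 1"] not_dvd_Suc_self[OF assms(1)] by auto
  then show ?thesis
    using assms(1) mult_in_J unfolding plant_def
    by (auto simp: transpose_def)
qed

lemma inv_plant:
  assumes "2 \<le> p" and "J \<subseteq> {..<p}"
  shows "inv (plant p J) = plant p J"
  using plant_involution[OF assms] by (intro inv_equality) auto

lemma plant_permutes:
  assumes "2 \<le> p" and "J \<subseteq> {..<p}"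
    and "(\<lambda>j. j * p) ` J \<subseteq> {..<R}" and "p + 1 < R"
  shows "plant p J permutes {..<R}"
  unfolding permutes_def
proof (intro conjI allI impI)
  fix x :: nat
  assume "x \<notin> {..<R}"
  moreover have "p < R" using assms(4) by simp
  ultimately show "plant p J x = x"
    using assms(2-4) by (auto simp: plant_def transpose_def)
next
  fix y
  show "\<exists>!x. plant p J x = y"
    using plant_involution[OF assms(1,2)] by metis
qed

lemma plant_eq_outside_support:
  assumes "x \<notin> plant_support p J"
  shows "plant p J x = plant p {} x"
  using assms by (auto simp: plant_def plant_support_def transpose_def)

lemma plant_support_key:
  assumes "2 \<le> p" and "J \<subseteq> {..<p}" and "x \<in> plant_support p J"
  shows "(if x = p + 1 then 0 else if x < p then x else x div p) \<in> J"
proof -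
  have "j * p \<noteq> p + 1" for j
    using not_dvd_Suc_self[OF assms(1)] by (metis dvd_triv_right)
  moreover have "j * p < p \<longleftrightarrow> j = 0" for j
    using assms(1) by (cases j) auto
  moreover have "y < p" if "y \<in> J" for y
    using assms(2) that by auto
  ultimately show ?thesis
    using assms(1,3) unfolding plant_support_def by (auto split: if_splits)
qed

lemma plant_support_disjoint:
  assumes "2 \<le> p" and "J \<subseteq> {..<p}" and "J' \<subseteq> {..<p}" and "J \<inter> J' = {}"
  shows "plant_support p J \<inter> plant_support p J' = {}"
  using plant_support_key[OF assms(1,2)] plant_support_key[OF assms(1,3)] assms(4) by blast

lemma plant_mult_self: "j \<in> J \<Longrightarrow> 0 < p \<Longrightarrow> plant p J (j * p) = j"
  by (simp add: plant_def)

lemma plant_less_imp_planted: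
  assumes "2 \<le> p" and "p dvd x" and "plant p J x < p"
  shows "x \<in> (\<lambda>j. j * p) ` J"
proof (rule ccontr)
  assume x: "x \<notin> (\<lambda>j. j * p) ` J"
  then have "0 \<notin> J \<or> x \<noteq> 0"
    by force
  moreover have "x = 0" if "x < p"
    using that assms(2) nat_dvd_not_less[of x p] by auto
  moreover have "\<not> p dvd p + 1"
    using not_dvd_Suc_self[OF assms(1)] .
  ultimately show False
    using x assms(2,3) unfolding plant_def by (auto simp: transpose_def split: if_splits)
qed

lemma Xpairs_plant:
  assumes "1 \<le> c" and "J \<subseteq> {..<2^c}" and "(\<lambda>j. j * 2^c) ` J \<subseteq> {..<2^(r+c)}"
  shows "Xpairs r c (plant (2^c) J) = (\<lambda>j. (j * 2^c, j)) ` J"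
proof (intro set_eqI iffI)
  fix xy
  assume "xy \<in> Xpairs r c (plant (2^c) J)"
  then obtain x where xy: "xy = (x, plant (2^c) J x)" and "2^c dvd x" and "plant (2^c) J x < 2^c"
    by (auto simp: Xpairs_def X1_def X2_def bitstrings_def dvd_eq_mod_eq_0)
  then obtain j where "j \<in> J" and "x = j * 2^c"
    using plant_less_imp_planted[of "2^c" x J] one_less_power[of "2::nat" c] assms(1) by auto
  then show "xy \<in> (\<lambda>j. (j * 2^c, j)) ` J"
    using xy plant_mult_self by auto
next
  fix xy
  assume "xy \<in> (\<lambda>j. (j * 2^c, j)) ` J"
  then obtain j where "j \<in> J" and xy: "xy = (j * 2^c, j)"
    by auto
  moreover have "j < 2^c"
    using \<open>j \<in> J\<close> assms(2) by auto
  moreover from this have "j < 2^(r+c)"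
    using power_increasing[of c "r + c" "2::nat"] by linarith
  ultimately show "xy \<in> Xpairs r c (plant (2^c) J)"
    using assms(3) plant_mult_self[of j J "2^c"]
    by (auto simp: Xpairs_def X1_def X2_def bitstrings_def)
qed

lemma bit_block_bounds:
  fixes J :: "nat set"
  assumes "J \<subseteq> {..<2 ^ min r c}"
  shows "J \<subseteq> {..<2^c}" and "(\<lambda>j. j * 2^c) ` J \<subseteq> {..<2^(r+c)}"
proof -
  have "(2::nat) ^ min r c \<le> 2^c" "(2::nat) ^ min r c \<le> 2^r"
    by (simp_all add: power_increasing)
  then show "J \<subseteq> {..<2^c}"
    using assms by (meson lessThan_subset_iff subset_trans)
  have "j * 2^c < 2^(r+c)" if "j < 2 ^ min r c" for j :: nat
  proof -
    have "j < 2^r"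
      using that \<open>2 ^ min r c \<le> 2^r\<close> by linarith
    then show ?thesis
      by (simp add: power_add)
  qed
  then show "(\<lambda>j. j * 2^c) ` J \<subseteq> {..<2^(r+c)}"
    using assms by force
qed

lemma plant_permutes_bitstrings:
  assumes "1 \<le> r" and "1 \<le> c" and "J \<subseteq> {..<2 ^ min r c}"
  shows "plant (2^c) J permutes {..<2^(r+c)}"
proof (rule plant_permutes[OF _ bit_block_bounds[OF assms(3)]])
  show "2 \<le> (2::nat)^c"
    using one_less_power[of "2::nat" c] assms(2) by simp
  have "2 * 2^c \<le> (2::nat)^(r+c)"
    using assms(1) power_increasing[of "Suc c" "r + c" "2::nat"] by simp
  then show "2^c + 1 < (2::nat)^(r+c)"
    using \<open>2 \<le> (2::nat)^c\<close> by linarith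
qed

lemma Xpairs_plant_bitstrings:
  assumes "1 \<le> c" and "J \<subseteq> {..<2 ^ min r c}"
  shows "Xpairs r c (plant (2^c) J) = (\<lambda>j. (j * 2^c, j)) ` J"
  using Xpairs_plant[OF assms(1) bit_block_bounds[OF assms(2)]] .

lemma sum_sqrt_success_prob_plant_le:
  assumes "1 \<le> r" and "1 \<le> c" and "finite Z" and "\<forall>t\<le>T. unitary_on (basis_set (r + c) m) (U t)"
    and J: "\<And>z. z \<in> Z \<Longrightarrow> J z \<subseteq> {..<2 ^ min r c}" and "disjoint_family_on J Z"
  shows "(\<Sum>z\<in>Z. sqrt (success_prob (r + c) m T U out (plant (2^c) (J z))
                         (Xpairs r c (plant (2^c) (J z)))))
         \<le> sqrt (card Z) * (2 * real T + 1)"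
proof (rule sum_sqrt_success_prob_le)
  let ?p = "2^c :: nat"
  have "2 \<le> ?p"
    using one_less_power[of "2::nat" c] assms(2) by simp
  have small: "J z \<subseteq> {..<?p}" if "z \<in> Z" for z
    using bit_block_bounds(1)[OF J[OF that]] .
  show "plant ?p {} permutes {..<2^(r+c)}"
    using plant_permutes_bitstrings[OF assms(1,2)] by simp
  show "plant ?p (J z) permutes {..<2^(r+c)}" if "z \<in> Z" for z
    using plant_permutes_bitstrings[OF assms(1,2) J[OF that]] .
  show "plant ?p (J z) a = plant ?p {} a \<and> inv (plant ?p (J z)) a = inv (plant ?p {}) a"
    if "z \<in> Z" and "a \<notin> plant_support ?p (J z)" for z a
    using that small inv_plant[OF \<open>2 \<le> ?p\<close>] plant_eq_outside_support by simp
  show "disjoint_family_on (\<lambda>z. plant_support ?p (J z)) Z"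
    using \<open>disjoint_family_on J Z\<close> plant_support_disjoint[OF \<open>2 \<le> ?p\<close> small small]
    by (rule disjoint_family_on_bisimulation)
  show "disjoint_family_on (\<lambda>z. Xpairs r c (plant ?p (J z))) Z"
    by (rule disjoint_family_on_bisimulation[OF \<open>disjoint_family_on J Z\<close>])
       (auto simp: Xpairs_plant_bitstrings[OF assms(2) J])
qed (use assms in auto)

lemma block_subset:
  fixes K N z :: nat
  assumes "z < N div K"
  shows "{z * K..<z * K + K} \<subseteq> {..<N}"
proof -
  have "z * K + K = Suc z * K"
    by simp
  also have "\<dots> \<le> N div K * K"
    using assms by (intro mult_le_mono1) simp
  also have "\<dots> \<le> N"
    by simp
  finally show ?thesis
    by auto
qed

lemma disjoint_family_blocks: "disjoint_family_on (\<lambda>z::nat. {z * K..<z * K + K}) Z"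
proof -
  have "{z * K..<z * K + K} \<inter> {z' * K..<z' * K + K} = {}" if "z < z'" for z z'
  proof -
    have "z * K + K \<le> z' * K"
      using mult_le_mono1[of "Suc z" z' K] that by simp
    then show ?thesis
      by auto
  qed
  then show ?thesis
    unfolding disjoint_family_on_def by (metis Int_commute linorder_neqE_nat)
qed

lemma less_two_mult_div:
  fixes K N :: nat
  assumes "0 < K" and "K \<le> N"
  shows "N < 2 * K * (N div K)"
proof -
  have "1 \<le> N div K"
    using assms by (simp add: Suc_le_eq div_greater_zero_iff)
  then have "K \<le> N div K * K"
    by simp
  moreover have "N = N div K * K + N mod K" and "N mod K < K"
    using assms(1) by simp_all
  ultimately have "N < 2 * (N div K * K)"
    by linarith
  then show ?thesis
    by (simp add: ac_simps)
qed

lemma mult_le_square_of_mult_sqrt_le: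
  fixes M \<epsilon> b :: real
  assumes "0 < M" and "0 \<le> \<epsilon>" and "M * sqrt \<epsilon> \<le> sqrt M * b"
  shows "M * \<epsilon> \<le> b\<^sup>2"
proof -
  have "0 \<le> M * \<epsilon>"
    using assms(1,2) by simp
  have "sqrt M * sqrt (M * \<epsilon>) \<le> sqrt M * b"
    using assms by (simp add: real_sqrt_mult mult.assoc[symmetric])
  then have "sqrt (M * \<epsilon>) \<le> b"
    using assms(1) by (simp add: mult_le_cancel_left_pos)
  then have "(sqrt (M * \<epsilon>))\<^sup>2 \<le> b\<^sup>2"
    by (rule power_mono) (simp add: \<open>0 \<le> M * \<epsilon>\<close>)
  then show ?thesis
    using \<open>0 \<le> M * \<epsilon>\<close> by simp
qed

theorem lemma4:
  fixes r c K T m :: nat and \<epsilon> :: real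
    and U :: "nat \<Rightarrow> qop" and out :: "idx \<Rightarrow> nat \<times> nat"
  assumes "r \<ge> 1" and "c \<ge> 1"
    and "1 \<le> K" and "K \<le> 2 ^ min r c"
    and "m \<ge> 1"
    and "\<forall>t\<le>T. unitary_on (basis_set (r + c) m) (U t)"
    and "\<epsilon> > 0"
    and "\<forall>\<phi>. \<phi> permutes {..<2^(r + c)} \<and> card (Xpairs r c \<phi>) = K \<longrightarrow>
           success_prob (r + c) m T U out \<phi> (Xpairs r c \<phi>) \<ge> \<epsilon>"
  shows "\<epsilon> \<le> 8 * (real T + 1)^2 * real K / 2 ^ min r c"
proof -
  define M where "M = 2 ^ min r c div K"
  define J where "J = (\<lambda>z. {z * K..<z * K + K})"
  let ?\<phi> = "\<lambda>z. plant (2^c) (J z)"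
  have J: "J z \<subseteq> {..<2 ^ min r c}" if "z \<in> {..<M}" for z
    using that block_subset unfolding M_def J_def by simp
  have "card (Xpairs r c (?\<phi> z)) = K" if "z \<in> {..<M}" for z
    unfolding Xpairs_plant_bitstrings[OF assms(2) J[OF that]] by (simp add: card_image inj_on_def J_def)
  then have "sqrt \<epsilon> \<le> sqrt (success_prob (r + c) m T U out (?\<phi> z) (Xpairs r c (?\<phi> z)))"
    if "z \<in> {..<M}" for z
    using assms(8) plant_permutes_bitstrings[OF assms(1,2) J[OF that]] that by simp
  then have "real M * sqrt \<epsilon> \<le> (\<Sum>z<M. sqrt (success_prob (r + c) m T U out (?\<phi> z) (Xpairs r c (?\<phi> z))))"
    using sum_mono[of "{..<M}" "\<lambda>_. sqrt \<epsilon>"] by simp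
  also have "\<dots> \<le> sqrt (real M) * (2 * real T + 1)"
    using sum_sqrt_success_prob_plant_le[OF assms(1,2) _ assms(6) J, of "{..<M}"]
    unfolding J_def by (simp add: disjoint_family_blocks)
  finally have M_\<epsilon>: "real M * \<epsilon> \<le> (2 * real T + 1)\<^sup>2"
    using assms(3,4,7) unfolding M_def
    by (intro mult_le_square_of_mult_sqrt_le) (simp_all add: div_greater_zero_iff)
  have "real (2 ^ min r c) \<le> real (2 * K * M)"
    unfolding M_def using assms(3,4) by (intro of_nat_mono less_imp_le[OF less_two_mult_div]) auto
  then have "\<epsilon> * 2 ^ min r c \<le> 2 * K * (real M * \<epsilon>)"
    using assms(7) mult_left_mono[of _ _ \<epsilon>] by (simp add: ac_simps)
  also have "\<dots> \<le> 2 * K * (2 * real T + 1)\<^sup>2"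
    using M_\<epsilon> by (intro mult_left_mono) simp_all
  also have "\<dots> \<le> 8 * (real T + 1)^2 * real K"
    by (simp add: power2_eq_square algebra_simps)
  finally show ?thesis
    by (simp add: pos_le_divide_eq)
qed

end
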